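(* Let $\mathbb{F}$ be a field and let $G$ be a finite absolutely irreducible subgroup of $\mathrm{GL}(n,\mathbb{F})$ that is self-normalizing in $\mathrm{GL}(n,\mathbb{F})$ modulo scalars (i.e., $N_{\mathrm{GL}(n,\mathbb{F})}(G)=G\cdot Z$ where $Z$ is the group of scalar matrices). If $G$ has precisely $|\mathrm{Out}(G)|$ inequivalent faithful absolutely irreducible representations in $\mathrm{GL}(n,\mathbb{F})$, then every absolutely irreducible subgroup of $\mathrm{GL}(n,\mathbb{F})$ isomorphic to $G$ is $\mathrm{GL}(n,\mathbb{F})$-conjugate to $G$. *)

theory Defs
  imports "HOL-Algebra.Algebraic_Closure_Type" "Jordan_Normal_Form.Matrix"
begin

definition GL :: "nat \<Rightarrow> 'a::field mat set" where
  "GL n = {A \<in> carrier_mat n n. invertible_mat A}"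

definition is_inv_mat :: "nat \<Rightarrow> 'a::field mat \<Rightarrow> 'a mat \<Rightarrow> bool" where
  "is_inv_mat n A B \<longleftrightarrow> A \<in> carrier_mat n n \<and> B \<in> carrier_mat n n \<and>
     A * B = 1\<^sub>m n \<and> B * A = 1\<^sub>m n"

definition subgroup_GL :: "nat \<Rightarrow> 'a::field mat set \<Rightarrow> bool" where
  "subgroup_GL n H \<longleftrightarrow> H \<subseteq> GL n \<and> 1\<^sub>m n \<in> H \<and>
     (\<forall>A\<in>H. \<forall>B\<in>H. A * B \<in> H) \<and>
     (\<forall>A\<in>H. \<exists>B\<in>H. is_inv_mat n A B)"

definition subspace_vec :: "nat \<Rightarrow> 'a::field vec set \<Rightarrow> bool" where
  "subspace_vec n W \<longleftrightarrow> W \<subseteq> carrier_vec n \<and> 0\<^sub>v n \<in> W \<and>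
     (\<forall>v\<in>W. \<forall>w\<in>W. v + w \<in> W) \<and> (\<forall>c. \<forall>v\<in>W. c \<cdot>\<^sub>v v \<in> W)"

definition irreducible_mats :: "nat \<Rightarrow> 'a::field mat set \<Rightarrow> bool" where
  "irreducible_mats n H \<longleftrightarrow> n > 0 \<and>
     (\<forall>W. subspace_vec n W \<and> (\<forall>A\<in>H. \<forall>v\<in>W. A *\<^sub>v v \<in> W) \<longrightarrow>
          W = {0\<^sub>v n} \<or> W = carrier_vec n)"

definition abs_irreducible :: "nat \<Rightarrow> 'a::field mat set \<Rightarrow> bool" where
  "abs_irreducible n H \<longleftrightarrow> irreducible_mats n (map_mat to_ac ` H)"

definition mat_group_hom :: "'a::field mat set \<Rightarrow> 'b::field mat set \<Rightarrow> ('a mat \<Rightarrow> 'b mat) \<Rightarrow> bool" where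
  "mat_group_hom G H f \<longleftrightarrow> (\<forall>x\<in>G. f x \<in> H) \<and> (\<forall>x\<in>G. \<forall>y\<in>G. f (x * y) = f x * f y)"

definition mat_group_iso :: "'a::field mat set \<Rightarrow> 'b::field mat set \<Rightarrow> ('a mat \<Rightarrow> 'b mat) \<Rightarrow> bool" where
  "mat_group_iso G H f \<longleftrightarrow> mat_group_hom G H f \<and> bij_betw f G H"

text \<open>Aut(G), Inn(G) and Out(G) = Aut(G)/Inn(G) (cosets f Inn(G)).\<close>
definition Aut :: "'a::field mat set \<Rightarrow> ('a mat \<Rightarrow> 'a mat) set" where
  "Aut G = {f. f \<in> extensional G \<and> mat_group_iso G G f}"

definition Inn :: "nat \<Rightarrow> 'a::field mat set \<Rightarrow> ('a mat \<Rightarrow> 'a mat) set" where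
  "Inn n G = {(\<lambda>x\<in>G. g * x * h) | g h. g \<in> G \<and> h \<in> G \<and> is_inv_mat n g h}"

definition Out :: "nat \<Rightarrow> 'a::field mat set \<Rightarrow> ('a mat \<Rightarrow> 'a mat) set set" where
  "Out n G = (\<lambda>f. (\<lambda>i. compose G f i) ` Inn n G) ` Aut G"

definition scalars :: "nat \<Rightarrow> 'a::field mat set" where
  "scalars n = {c \<cdot>\<^sub>m 1\<^sub>m n | c. c \<noteq> 0}"

definition conj_set :: "nat \<Rightarrow> 'a::field mat \<Rightarrow> 'a mat set \<Rightarrow> 'a mat set" where
  "conj_set n P G = {P * g * Q | g Q. g \<in> G \<and> is_inv_mat n P Q}"

definition normaliser_GL :: "nat \<Rightarrow> 'a::field mat set \<Rightarrow> 'a mat set" where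
  "normaliser_GL n G = {P \<in> GL n. conj_set n P G = G}"

definition set_prod_mat :: "'a::field mat set \<Rightarrow> 'a mat set \<Rightarrow> 'a mat set" where
  "set_prod_mat A B = {a * b | a b. a \<in> A \<and> b \<in> B}"

definition faithful_abs_irr_reps :: "nat \<Rightarrow> 'a::field mat set \<Rightarrow> ('a mat \<Rightarrow> 'a mat) set" where
  "faithful_abs_irr_reps n G = {\<rho>. \<rho> \<in> extensional G \<and> mat_group_hom G (GL n) \<rho> \<and>
      inj_on \<rho> G \<and> abs_irreducible n (\<rho> ` G)}"

definition equiv_reps :: "nat \<Rightarrow> 'a::field mat set \<Rightarrow> (('a mat \<Rightarrow> 'a mat) \<times> ('a mat \<Rightarrow> 'a mat)) set" where
  "equiv_reps n G = {(\<rho>, \<sigma>). \<rho> \<in> faithful_abs_irr_reps n G \<and> \<sigma> \<in> faithful_abs_irr_reps n G \<and>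
      (\<exists>P Q. is_inv_mat n P Q \<and> (\<forall>g\<in>G. \<sigma> g = P * \<rho> g * Q))}"

end

theory Submission
  imports Defs
begin

text \<open>Every automorphism of G is a faithful absolutely irreducible representation of G in
  GL(n,F). If two automorphisms \<alpha>, \<beta> are equivalent, \<alpha> = P \<beta> P\<inverse>, then P normalises G,
  so P = c k with c scalar and k \<in> G, and \<alpha> differs from \<beta> by the inner automorphism
  induced by \<beta>\<inverse>(k). So the class of an automorphism determines its coset modulo Inn(G),
  and the automorphisms meet at least |Out(G)| classes; as there are exactly |Out(G)| classes,
  every class contains an automorphism. A subgroup H isomorphic to G is the image of a
  representation, which is then equivalent to an automorphism \<alpha>, and
  H = P \<alpha>(G) P\<inverse> = P G P\<inverse>.\<close>

lemma is_inv_mat_unique: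
  assumes "is_inv_mat n P Q" and "is_inv_mat n P Q'"
  shows "Q' = Q"
proof -
  have c: "P \<in> carrier_mat n n" "Q \<in> carrier_mat n n" "Q' \<in> carrier_mat n n"
    "P * Q = 1\<^sub>m n" "Q' * P = 1\<^sub>m n"
    using assms unfolding is_inv_mat_def by auto
  have "Q' = Q' * (P * Q)" using c by (simp add: right_mult_one_mat)
  also have "\<dots> = (Q' * P) * Q" using assoc_mult_mat[OF c(3,1,2)] by simp
  also have "\<dots> = Q" using c by (simp add: left_mult_one_mat)
  finally show ?thesis .
qed

lemma is_inv_mat_GL: "is_inv_mat n P Q \<Longrightarrow> P \<in> GL n"
  unfolding is_inv_mat_def GL_def invertible_mat_def inverts_mat_def by auto

lemma is_inv_mat_mult:
  assumes "is_inv_mat n A A'" and "is_inv_mat n B B'"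
  shows "is_inv_mat n (A * B) (B' * A')"
proof -
  have c: "A \<in> carrier_mat n n" "A' \<in> carrier_mat n n" "B \<in> carrier_mat n n" "B' \<in> carrier_mat n n"
    using assms unfolding is_inv_mat_def by auto
  have "A * B * (B' * A') = A * (B * B') * A'" "B' * A' * (A * B) = B' * (A' * A) * B"
    using c by (simp_all add: assoc_mult_mat[of _ n n _ n _ n])
  then show ?thesis using assms c unfolding is_inv_mat_def by simp
qed

lemma is_inv_mat_idempotent_eq_one:
  assumes "is_inv_mat n A B" and "A * A = A"
  shows "A = 1\<^sub>m n"
proof -
  have c: "A \<in> carrier_mat n n" "B \<in> carrier_mat n n" "A * B = 1\<^sub>m n"
    using assms(1) unfolding is_inv_mat_def by auto
  have "A = A * (A * B)" using c by simp
  also have "\<dots> = (A * A) * B" using c by simp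
  also have "\<dots> = 1\<^sub>m n" using c assms(2) by simp
  finally show ?thesis .
qed

lemma smult_smult_mat_inverse:
  fixes c :: "'a::field"
  assumes "c \<noteq> 0"
  shows "c \<cdot>\<^sub>m (inverse c \<cdot>\<^sub>m A) = A"
  by (rule eq_matI) (use assms in auto)

lemma smult_mult_smult_inverse_mat:
  fixes c :: "'a::field"
  assumes "c \<noteq> 0" and "A \<in> carrier_mat n m" and "B \<in> carrier_mat m k"
  shows "(c \<cdot>\<^sub>m A) * (inverse c \<cdot>\<^sub>m B) = A * B"
proof -
  have "inverse c \<cdot>\<^sub>m B \<in> carrier_mat m k" using assms(3) by simp
  with assms(2) have "(c \<cdot>\<^sub>m A) * (inverse c \<cdot>\<^sub>m B) = c \<cdot>\<^sub>m (A * (inverse c \<cdot>\<^sub>m B))"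
    by (rule mult_smult_assoc_mat)
  also have "\<dots> = A * B"
    using assms by (simp add: mult_smult_distrib smult_smult_mat_inverse)
  finally show ?thesis .
qed

lemma smult_conj_cancel:
  fixes c :: "'a::field"
  assumes "c \<noteq> 0" and "A \<in> carrier_mat n n" "B \<in> carrier_mat n n" "C \<in> carrier_mat n n"
  shows "(c \<cdot>\<^sub>m A) * B * (inverse c \<cdot>\<^sub>m C) = A * B * C"
  using assms smult_mult_smult_inverse_mat[of c "A * B" n n C n]
  by (simp add: mult_smult_assoc_mat)

lemma is_inv_mat_smult:
  fixes c :: "'a::field"
  assumes "is_inv_mat n A B" and "c \<noteq> 0"
  shows "is_inv_mat n (c \<cdot>\<^sub>m A) (inverse c \<cdot>\<^sub>m B)"
proof -
  have "inverse c \<noteq> 0" "inverse (inverse c) = c" using assms(2) by auto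
  then show ?thesis
    using assms smult_mult_smult_inverse_mat[of c A n n B n]
      smult_mult_smult_inverse_mat[of "inverse c" B n n A n]
    unfolding is_inv_mat_def by auto
qed

lemma conj_set_eq_image:
  assumes "is_inv_mat n P Q"
  shows "conj_set n P S = (\<lambda>A. P * A * Q) ` S"
  unfolding conj_set_def using is_inv_mat_unique[OF assms] assms by blast

lemma conj_set_image_if_equivalent:
  assumes "is_inv_mat n P Q" and "\<forall>g\<in>G. \<rho> g = P * \<sigma> g * Q"
  shows "conj_set n P (\<sigma> ` G) = \<rho> ` G"
  using assms by (auto simp: conj_set_eq_image image_image)

lemma subgroup_GL_carrier: "subgroup_GL n G \<Longrightarrow> A \<in> G \<Longrightarrow> A \<in> carrier_mat n n"
  unfolding subgroup_GL_def GL_def by auto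

lemma mat_group_hom_one:
  assumes G: "subgroup_GL n G" and H: "subgroup_GL n H" and f: "mat_group_hom G H f"
  shows "f (1\<^sub>m n) = 1\<^sub>m n"
proof -
  have "1\<^sub>m n \<in> G" using G unfolding subgroup_GL_def by simp
  then have "f (1\<^sub>m n) \<in> H" "f (1\<^sub>m n) * f (1\<^sub>m n) = f (1\<^sub>m n)"
    using f unfolding mat_group_hom_def by (metis left_mult_one_mat one_carrier_mat)+
  with H obtain B where "is_inv_mat n (f (1\<^sub>m n)) B"
    unfolding subgroup_GL_def by blast
  then show ?thesis using is_inv_mat_idempotent_eq_one \<open>f (1\<^sub>m n) * f (1\<^sub>m n) = f (1\<^sub>m n)\<close>
    by blast
qed

lemma mat_group_hom_is_inv_mat:
  assumes G: "subgroup_GL n G" and H: "subgroup_GL n H" and f: "mat_group_hom G H f"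
    and "g \<in> G" "h \<in> G" "is_inv_mat n g h"
  shows "is_inv_mat n (f g) (f h)"
proof -
  have "f g * f h = f (1\<^sub>m n)" "f h * f g = f (1\<^sub>m n)"
    using assms unfolding mat_group_hom_def is_inv_mat_def by metis+
  moreover have "f g \<in> carrier_mat n n" "f h \<in> carrier_mat n n"
    using assms subgroup_GL_carrier[OF H] unfolding mat_group_hom_def by auto
  ultimately show ?thesis
    using mat_group_hom_one[OF G H f] unfolding is_inv_mat_def by simp
qed

lemma Aut_image: "\<alpha> \<in> Aut G \<Longrightarrow> \<alpha> ` G = G"
  unfolding Aut_def mat_group_iso_def by (auto dest: bij_betw_imp_surj_on)

lemma Aut_hom: "\<alpha> \<in> Aut G \<Longrightarrow> mat_group_hom G G \<alpha>"
  unfolding Aut_def mat_group_iso_def by simp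

lemma iso_restrict_in_faithful_abs_irr_reps:
  assumes "subgroup_GL n G" and "subgroup_GL n H" and "abs_irreducible n H"
    and "mat_group_iso G H f"
  shows "restrict f G \<in> faithful_abs_irr_reps n G"
proof -
  have "f ` G = H" "inj_on f G"
    using assms(4) unfolding mat_group_iso_def bij_betw_def by auto
  then show ?thesis
    using assms unfolding faithful_abs_irr_reps_def mat_group_iso_def mat_group_hom_def
      subgroup_GL_def inj_on_def by auto
qed

lemma Aut_subset_faithful_abs_irr_reps:
  assumes "subgroup_GL n G" and "abs_irreducible n G"
  shows "Aut G \<subseteq> faithful_abs_irr_reps n G"
proof
  fix \<alpha> assume "\<alpha> \<in> Aut G"
  then have "restrict \<alpha> G \<in> faithful_abs_irr_reps n G"
    using assms iso_restrict_in_faithful_abs_irr_reps unfolding Aut_def by blast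
  moreover have "restrict \<alpha> G = \<alpha>"
    using \<open>\<alpha> \<in> Aut G\<close> unfolding Aut_def by (simp add: extensional_restrict)
  ultimately show "\<alpha> \<in> faithful_abs_irr_reps n G" by simp
qed

lemma equiv_reps_refl:
  assumes "\<rho> \<in> faithful_abs_irr_reps n G"
  shows "(\<rho>, \<rho>) \<in> equiv_reps n G"
proof -
  have "\<forall>g\<in>G. \<rho> g = 1\<^sub>m n * \<rho> g * 1\<^sub>m n"
    using assms unfolding faithful_abs_irr_reps_def mat_group_hom_def GL_def by auto
  moreover have "is_inv_mat n (1\<^sub>m n) (1\<^sub>m n)" unfolding is_inv_mat_def by simp
  ultimately show ?thesis using assms unfolding equiv_reps_def by blast
qed

definition Inn_coset :: "nat \<Rightarrow> 'a::field mat set \<Rightarrow> ('a mat \<Rightarrow> 'a mat) \<Rightarrow> ('a mat \<Rightarrow> 'a mat) set"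
  where "Inn_coset n G f = (\<lambda>i. compose G f i) ` Inn n G"

lemma Out_eq_Inn_cosets: "Out n G = Inn_coset n G ` Aut G"
  unfolding Out_def Inn_coset_def ..

lemma compose_inner:
  assumes G: "subgroup_GL n G" and "k \<in> G" "k' \<in> G" "g \<in> G" "h \<in> G"
    and \<alpha>: "\<forall>x\<in>G. \<alpha> x = \<beta> (k * x * k')"
  shows "compose G \<alpha> (\<lambda>x\<in>G. g * x * h) = compose G \<beta> (\<lambda>x\<in>G. (k * g) * x * (h * k'))"
proof
  fix x
  show "compose G \<alpha> (\<lambda>x\<in>G. g * x * h) x = compose G \<beta> (\<lambda>x\<in>G. (k * g) * x * (h * k')) x"
  proof (cases "x \<in> G")
    case True
    have "g * x * h \<in> G" using G True assms unfolding subgroup_GL_def by blast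
    moreover have "k * (g * x * h) * k' = (k * g) * x * (h * k')"
      using True assms(2-5) subgroup_GL_carrier[OF G]
      by (simp add: assoc_mult_mat[of _ n n _ n _ n] mult_carrier_mat[of _ n n _ n])
    ultimately show ?thesis using True \<alpha> by (simp add: compose_def)
  qed (simp add: compose_def)
qed

lemma Inn_coset_subset_if_inner:
  assumes G: "subgroup_GL n G" and k: "k \<in> G" "k' \<in> G" "is_inv_mat n k k'"
    and \<alpha>: "\<forall>x\<in>G. \<alpha> x = \<beta> (k * x * k')"
  shows "Inn_coset n G \<alpha> \<subseteq> Inn_coset n G \<beta>"
proof
  fix F assume "F \<in> Inn_coset n G \<alpha>"
  then obtain g h where gh: "g \<in> G" "h \<in> G" "is_inv_mat n g h"
    and F: "F = compose G \<alpha> (\<lambda>x\<in>G. g * x * h)"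
    unfolding Inn_coset_def Inn_def by auto
  have "k * g \<in> G" "h * k' \<in> G" using G k gh unfolding subgroup_GL_def by blast+
  then have "(\<lambda>x\<in>G. (k * g) * x * (h * k')) \<in> Inn n G"
    unfolding Inn_def using is_inv_mat_mult[OF k(3) gh(3)] by blast
  then show "F \<in> Inn_coset n G \<beta>"
    unfolding F compose_inner[OF G k(1,2) gh(1,2) \<alpha>] Inn_coset_def by blast
qed

lemma Aut_conj_in_normaliser:
  assumes "\<alpha> \<in> Aut G" "\<beta> \<in> Aut G" "is_inv_mat n P Q" "\<forall>g\<in>G. \<alpha> g = P * \<beta> g * Q"
  shows "P \<in> normaliser_GL n G"
proof -
  have "conj_set n P G = G"
    using conj_set_image_if_equivalent[OF assms(3,4)] Aut_image[OF assms(1)] Aut_image[OF assms(2)]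
    by simp
  then show ?thesis unfolding normaliser_GL_def using is_inv_mat_GL[OF assms(3)] by blast
qed

lemma Aut_conj_by_scaled_image_is_inner:
  assumes G: "subgroup_GL n G" and \<beta>: "\<beta> \<in> Aut G" and k: "k \<in> G" and "c \<noteq> 0"
    and PQ: "is_inv_mat n (c \<cdot>\<^sub>m \<beta> k) Q" and \<alpha>: "\<forall>g\<in>G. \<alpha> g = (c \<cdot>\<^sub>m \<beta> k) * \<beta> g * Q"
  shows "\<exists>k'\<in>G. is_inv_mat n k k' \<and> (\<forall>x\<in>G. \<alpha> x = \<beta> (k * x * k'))"
proof -
  obtain k' where k': "k' \<in> G" "is_inv_mat n k k'" using G k unfolding subgroup_GL_def by blast
  have hom: "mat_group_hom G G \<beta>" using Aut_hom[OF \<beta>] .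
  have "is_inv_mat n (\<beta> k) (\<beta> k')" using mat_group_hom_is_inv_mat[OF G G hom k k'] .
  then have Q: "Q = inverse c \<cdot>\<^sub>m \<beta> k'"
    using is_inv_mat_unique[OF is_inv_mat_smult PQ] \<open>c \<noteq> 0\<close> by blast
  have "\<alpha> x = \<beta> (k * x * k')" if x: "x \<in> G" for x
  proof -
    have "\<beta> k \<in> G" "\<beta> x \<in> G" "\<beta> k' \<in> G"
      using hom k k'(1) x unfolding mat_group_hom_def by auto
    then have car: "\<beta> k \<in> carrier_mat n n" "\<beta> x \<in> carrier_mat n n" "\<beta> k' \<in> carrier_mat n n"
      using subgroup_GL_carrier[OF G] by auto
    have "\<alpha> x = (c \<cdot>\<^sub>m \<beta> k) * \<beta> x * (inverse c \<cdot>\<^sub>m \<beta> k')" using \<alpha> x Q by simp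
    also have "\<dots> = \<beta> k * \<beta> x * \<beta> k'" by (rule smult_conj_cancel[OF \<open>c \<noteq> 0\<close> car])
    also have "\<dots> = \<beta> (k * x * k')"
      using hom k k'(1) x G unfolding mat_group_hom_def subgroup_GL_def by metis
    finally show ?thesis .
  qed
  then show ?thesis using k' by blast
qed

lemma Inn_coset_subset_if_equivalent:
  assumes G: "subgroup_GL n G" and norm: "normaliser_GL n G = set_prod_mat G (scalars n)"
    and \<alpha>: "\<alpha> \<in> Aut G" and \<beta>: "\<beta> \<in> Aut G"
    and PQ: "is_inv_mat n P Q" and conj: "\<forall>g\<in>G. \<alpha> g = P * \<beta> g * Q"
  shows "Inn_coset n G \<alpha> \<subseteq> Inn_coset n G \<beta>"
proof -
  have "P \<in> set_prod_mat G (scalars n)"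
    using Aut_conj_in_normaliser[OF \<alpha> \<beta> PQ conj] norm by simp
  then obtain k c where "k \<in> G" "c \<noteq> 0" "P = k * (c \<cdot>\<^sub>m 1\<^sub>m n)"
    unfolding set_prod_mat_def scalars_def by blast
  moreover obtain k0 where k0: "k0 \<in> G" "k = \<beta> k0"
    using \<open>k \<in> G\<close> Aut_image[OF \<beta>] by blast
  ultimately have "P = c \<cdot>\<^sub>m \<beta> k0"
    using subgroup_GL_carrier[OF G, of k] by (simp add: mult_smult_distrib[of _ n n "1\<^sub>m n" n])
  then obtain k0' where "k0' \<in> G" "is_inv_mat n k0 k0'" "\<forall>x\<in>G. \<alpha> x = \<beta> (k0 * x * k0')"
    using Aut_conj_by_scaled_image_is_inner[OF G \<beta> k0(1) \<open>c \<noteq> 0\<close>] PQ conj by blast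
  then show ?thesis using Inn_coset_subset_if_inner[OF G k0(1)] by blast
qed

lemma Inn_coset_eq_if_equiv_class_eq:
  assumes G: "subgroup_GL n G" and irr: "abs_irreducible n G"
    and norm: "normaliser_GL n G = set_prod_mat G (scalars n)"
    and \<alpha>: "\<alpha> \<in> Aut G" and \<beta>: "\<beta> \<in> Aut G"
    and eq: "equiv_reps n G `` {\<alpha>} = equiv_reps n G `` {\<beta>}"
  shows "Inn_coset n G \<alpha> = Inn_coset n G \<beta>"
proof -
  have "(\<alpha>, \<alpha>) \<in> equiv_reps n G" "(\<beta>, \<beta>) \<in> equiv_reps n G"
    using equiv_reps_refl Aut_subset_faithful_abs_irr_reps[OF G irr] \<alpha> \<beta> by blast+
  then have "(\<beta>, \<alpha>) \<in> equiv_reps n G" "(\<alpha>, \<beta>) \<in> equiv_reps n G"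
    using eq by blast+
  then obtain P Q P' Q' where
    "is_inv_mat n P Q" "\<forall>g\<in>G. \<alpha> g = P * \<beta> g * Q"
    "is_inv_mat n P' Q'" "\<forall>g\<in>G. \<beta> g = P' * \<alpha> g * Q'"
    unfolding equiv_reps_def by blast
  then show ?thesis
    using Inn_coset_subset_if_equivalent[OF G norm] \<alpha> \<beta> by (meson subset_antisym)
qed

lemma image_eq_of_card_le_factor:
  assumes "finite B" and "f ` A \<subseteq> B" and "card B \<le> card (g ` A)"
    and factor: "\<And>a b. a \<in> A \<Longrightarrow> b \<in> A \<Longrightarrow> f a = f b \<Longrightarrow> g a = g b"
  shows "f ` A = B"
proof -
  let ?h = "\<lambda>y. g (inv_into A f y)"
  have fin: "finite (f ` A)" using assms(1,2) by (rule finite_subset[rotated])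
  have "g ` A \<subseteq> ?h ` f ` A"
  proof
    fix y assume "y \<in> g ` A"
    then obtain a where a: "a \<in> A" "y = g a" by blast
    have "g (inv_into A f (f a)) = g a"
      by (rule factor) (simp_all add: a(1) inv_into_into f_inv_into_f)
    then have "y = ?h (f a)" using a(2) by simp
    then show "y \<in> ?h ` f ` A" using a(1) by blast
  qed
  then have "card (g ` A) \<le> card (?h ` f ` A)" by (rule card_mono[OF finite_imageI[OF fin]])
  also have "\<dots> \<le> card (f ` A)" by (rule card_image_le[OF fin])
  finally show ?thesis using card_seteq[OF assms(1,2)] assms(3) by simp
qed

lemma equiv_classes_of_Aut_eq_quotient:
  assumes G: "subgroup_GL n G" and irr: "abs_irreducible n G"
    and norm: "normaliser_GL n G = set_prod_mat G (scalars n)"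
    and "finite (faithful_abs_irr_reps n G // equiv_reps n G)"
    and "card (faithful_abs_irr_reps n G // equiv_reps n G) = card (Out n G)"
  shows "(\<lambda>\<alpha>. equiv_reps n G `` {\<alpha>}) ` Aut G = faithful_abs_irr_reps n G // equiv_reps n G"
proof (rule image_eq_of_card_le_factor[where g = "Inn_coset n G"])
  show "(\<lambda>\<alpha>. equiv_reps n G `` {\<alpha>}) ` Aut G \<subseteq> faithful_abs_irr_reps n G // equiv_reps n G"
    using Aut_subset_faithful_abs_irr_reps[OF G irr] by (blast intro: quotientI)
  show "card (faithful_abs_irr_reps n G // equiv_reps n G) \<le> card (Inn_coset n G ` Aut G)"
    using assms(5) by (simp add: Out_eq_Inn_cosets)
  show "Inn_coset n G \<alpha> = Inn_coset n G \<beta>"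
    if "\<alpha> \<in> Aut G" "\<beta> \<in> Aut G" "equiv_reps n G `` {\<alpha>} = equiv_reps n G `` {\<beta>}" for \<alpha> \<beta>
    by (rule Inn_coset_eq_if_equiv_class_eq[OF G irr norm that])
qed (rule assms(4))

theorem corollary11p2:
  fixes G :: "'a::field mat set" and n :: nat
  assumes "subgroup_GL n G" and "finite G"
    and "abs_irreducible n G"
    and "normaliser_GL n G = set_prod_mat G (scalars n)"
    and "finite (faithful_abs_irr_reps n G // equiv_reps n G)"
    and "card (faithful_abs_irr_reps n G // equiv_reps n G) = card (Out n G)"
  shows "\<forall>H. subgroup_GL n H \<and> abs_irreducible n H \<and> (\<exists>f. mat_group_iso G H f)
           \<longrightarrow> (\<exists>P \<in> GL n. conj_set n P G = H)"
proof (intro allI impI)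
  fix H :: "'a mat set"
  assume "subgroup_GL n H \<and> abs_irreducible n H \<and> (\<exists>f. mat_group_iso G H f)"
  then obtain f where H: "subgroup_GL n H" "abs_irreducible n H" and f: "mat_group_iso G H f"
    by blast
  let ?F = "faithful_abs_irr_reps n G" and ?E = "equiv_reps n G"
  note classes = equiv_classes_of_Aut_eq_quotient[OF assms(1,3-6)]
  define \<rho> where "\<rho> = restrict f G"
  have \<rho>: "\<rho> \<in> ?F"
    unfolding \<rho>_def by (rule iso_restrict_in_faithful_abs_irr_reps[OF assms(1) H f])
  then have "?E `` {\<rho>} \<in> (\<lambda>\<alpha>. ?E `` {\<alpha>}) ` Aut G"
    unfolding classes by (rule quotientI)
  then obtain \<alpha> where \<alpha>: "\<alpha> \<in> Aut G" "?E `` {\<rho>} = ?E `` {\<alpha>}" by blast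
  have "\<rho> \<in> ?E `` {\<alpha>}" using equiv_reps_refl[OF \<rho>] \<alpha>(2) by blast
  then obtain P Q where PQ: "is_inv_mat n P Q" "\<forall>g\<in>G. \<rho> g = P * \<alpha> g * Q"
    unfolding equiv_reps_def by blast
  have "conj_set n P G = \<rho> ` G"
    using conj_set_image_if_equivalent[OF PQ] Aut_image[OF \<alpha>(1)] by simp
  also have "\<dots> = H"
    using f unfolding \<rho>_def mat_group_iso_def by (simp add: bij_betw_imp_surj_on)
  finally show "\<exists>P\<in>GL n. conj_set n P G = H" using is_inv_mat_GL[OF PQ(1)] by blast
qed

end
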